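(* There exist uncountably many Liouville numbers $\xi$ such that \[ w_{=2}(\xi) = w_{=2}^{*}(\xi) = +\infty. \]
   Context: For a polynomial $P \in \mathbb{Z}[X]$, $H(P)$ denotes the maximum of the absolute values of its coefficients. For a real algebraic number $\alpha$, $H(\alpha) = H(P)$, where $P$ is the minimal polynomial of $\alpha$ over $\mathbb{Z}$. Let $\xi$ be a real number. $w_1(\xi)$ is the supremum of the real numbers $w$ such that, for arbitrarily large $H$, there is a polynomial $P \in \mathbb{Z}[X]$ of degree at most $1$ with $H(P) \leq H$ and $0 < |P(\xi)| \leq H^{-w}$. A real number $\xi$ is a Liouville number if $w_1(\xi) = +\infty$. $w_{=2}(\xi)$ is the supremum of the real numbers $w$ such that, for arbitrarily large $H$, there is an irreducible polynomial $P \in \mathbb{Z}[X]$ of degree exactly $2$ with $H(P) \leq H$ and $0 < |P(\xi)| \leq H^{-w}$. $w_{=2}^{*}(\xi)$ is the supremum of the real numbers $w^{*}$ such that, for arbitrarily large $H$, there is a real algebraic number $\alpha$ of degree exactly $2$ with $H(\alpha) \leq H$ and $0 < |\xi - \alpha| \leq H(\alpha)^{-1} H^{-w^{*}}$. *)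

theory Defs
  imports "HOL-Computational_Algebra.Polynomial" "HOL-Library.Extended_Real"
          "HOL-Library.Countable_Set"
begin

definition height :: "int poly \<Rightarrow> int" where
  "height P = Max (insert 0 (abs ` set (coeffs P)))"

definition w1 :: "real \<Rightarrow> ereal" where
  "w1 \<xi> = Sup (ereal ` {w. \<forall>H0::real. \<exists>H\<ge>H0. \<exists>P::int poly.
      degree P \<le> 1 \<and> real_of_int (height P) \<le> H \<and>
      0 < \<bar>poly (map_poly real_of_int P) \<xi>\<bar> \<and> \<bar>poly (map_poly real_of_int P) \<xi>\<bar> \<le> H powr (-w)})"

definition liouville :: "real \<Rightarrow> bool" where
  "liouville \<xi> \<longleftrightarrow> w1 \<xi> = \<infinity>"

definition w_eq2 :: "real \<Rightarrow> ereal" where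
  "w_eq2 \<xi> = Sup (ereal ` {w. \<forall>H0::real. \<exists>H\<ge>H0. \<exists>P::int poly.
      irreducible P \<and> degree P = 2 \<and> real_of_int (height P) \<le> H \<and>
      0 < \<bar>poly (map_poly real_of_int P) \<xi>\<bar> \<and> \<bar>poly (map_poly real_of_int P) \<xi>\<bar> \<le> H powr (-w)})"

text \<open>Minimal polynomial over Z of a real number: irreducible in Z[X] (hence primitive),
  positive leading coefficient, vanishing at the number.\<close>
definition is_minpoly_Z :: "real \<Rightarrow> int poly \<Rightarrow> bool" where
  "is_minpoly_Z \<alpha> P \<longleftrightarrow> irreducible P \<and> lead_coeff P > 0 \<and> poly (map_poly real_of_int P) \<alpha> = 0"

definition w_eq2_star :: "real \<Rightarrow> ereal" where
  "w_eq2_star \<xi> = Sup (ereal ` {w. \<forall>H0::real. \<exists>H\<ge>H0. \<exists>(\<alpha>::real) (P::int poly).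
      is_minpoly_Z \<alpha> P \<and> degree P = 2 \<and> real_of_int (height P) \<le> H \<and>
      0 < \<bar>\<xi> - \<alpha>\<bar> \<and> \<bar>\<xi> - \<alpha>\<bar> \<le> inverse (real_of_int (height P)) * H powr (-w)})"

end

theory Submission
  imports Defs "HOL-Analysis.Analysis"
begin

text \<open>Quadratic irrationals are dense, and near any of them, say \<open>\<alpha>\<close> with minimal
  polynomial \<open>P\<close>, both \<open>\<bar>P(\<xi>)\<bar>\<close> and \<open>\<bar>\<xi> - \<alpha>\<bar>\<close> are positive and as small as we like; likewise for
  rationals and linear polynomials. Hence, for each exponent \<open>w\<close> and height threshold \<open>H\<^sub>0\<close>,
  the numbers admitting an approximation of quality \<open>w\<close> at some height \<open>H \<ge> H\<^sub>0\<close> form a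
  dense open set, in each of the three senses. By Baire's theorem the intersection of these
  countably many dense open sets is uncountable, and every number in it has all three
  exponents infinite.\<close>

lemma consecutive_not_both_squares:
  fixes m :: int
  assumes "m \<ge> 1"
  shows "(\<forall>k. k^2 \<noteq> m) \<or> (\<forall>k. k^2 \<noteq> m + 1)"
proof (rule ccontr)
  assume "\<not> ?thesis"
  then obtain k l where k: "\<bar>k\<bar>^2 = m" and l: "\<bar>l\<bar>^2 = m + 1"
    by auto
  have "\<bar>k\<bar> \<ge> 1"
    using k assms by (cases "k = 0") auto
  have "\<bar>k\<bar> < \<bar>l\<bar>"
    by (rule power_less_imp_less_base[of _ 2]) (use k l in auto)
  then have "(\<bar>k\<bar> + 1)^2 \<le> \<bar>l\<bar>^2"
    by (intro power_mono) auto
  then show False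
    using k l \<open>\<bar>k\<bar> \<ge> 1\<close> by (simp add: power2_eq_square algebra_simps)
qed

lemma sqrt_nonsquare_near:
  fixes t :: real
  assumes "t \<ge> 2"
  obtains d :: int where "d \<ge> 1" "\<forall>k. k^2 \<noteq> d" "\<bar>sqrt (of_int d) - t\<bar> < 1 / t"
proof -
  \<comment> \<open>One of the two integers next to \<open>t\<^sup>2\<close> is a nonsquare \<open>d\<close>,
    and then \<open>\<bar>\<surd>d - t\<bar> = \<bar>d - t\<^sup>2\<bar> / (\<surd>d + t) < 1/t\<close>.\<close>
  have "4 \<le> t^2"
    using power_mono[OF assms, of 2] by simp
  define m where "m = \<lfloor>t^2\<rfloor>"
  have "m \<ge> 1" "of_int m \<le> t^2" "t^2 < of_int m + 1"
    using \<open>4 \<le> t^2\<close> unfolding m_def by linarith+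
  obtain d where d: "d = m \<or> d = m + 1" and nonsquare: "\<forall>k. k^2 \<noteq> d"
    using consecutive_not_both_squares[OF \<open>m \<ge> 1\<close>] by blast
  define s where "s = sqrt (of_int d)"
  have "d \<ge> 1" "\<bar>of_int d - t^2\<bar> \<le> 1"
    using d \<open>m \<ge> 1\<close> \<open>of_int m \<le> t^2\<close> \<open>t^2 < of_int m + 1\<close> by auto
  then have "s > 0" "s^2 = of_int d"
    unfolding s_def by auto
  have "t > 0"
    using assms by linarith
  have "\<bar>s - t\<bar> * (s + t) = \<bar>(s - t) * (s + t)\<bar>"
    using \<open>s > 0\<close> \<open>t > 0\<close> by (simp add: abs_mult)
  also have "\<dots> = \<bar>of_int d - t^2\<bar>"
    using \<open>s^2 = of_int d\<close> by (simp add: power2_eq_square algebra_simps)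
  finally have "\<bar>s - t\<bar> * (s + t) \<le> 1"
    using \<open>\<bar>of_int d - t^2\<bar> \<le> 1\<close> by simp
  then have "\<bar>s - t\<bar> \<le> 1 / (s + t)"
    using \<open>s > 0\<close> \<open>t > 0\<close> by (simp add: le_divide_eq)
  also have "\<dots> < 1 / t"
    using \<open>s > 0\<close> \<open>t > 0\<close> by (simp add: divide_strict_left_mono)
  finally show ?thesis
    using that \<open>d \<ge> 1\<close> nonsquare unfolding s_def by blast
qed

lemma closure_shifted_sqrt_nonsquares:
  "closure {sqrt (of_int d) - of_int a | a d :: int. 0 \<le> d \<and> (\<forall>k. k^2 \<noteq> d)} = UNIV"
  (is "closure ?Q = UNIV")
proof -
  have "x \<in> closure ?Q" for x :: real
    unfolding closure_approachable
  proof (intro allI impI)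
    fix e :: real
    assume "e > 0"
    define a where "a = \<lceil>max (1/e) 2 - x\<rceil>"
    have t: "x + of_int a \<ge> 1/e" "x + of_int a \<ge> 2"
      unfolding a_def by linarith+
    obtain d :: int where "d \<ge> 1" "\<forall>k. k^2 \<noteq> d"
      and "\<bar>sqrt (of_int d) - (x + of_int a)\<bar> < 1 / (x + of_int a)"
      using sqrt_nonsquare_near[OF t(2)] by blast
    moreover have "1 / (x + of_int a) \<le> e"
      using t \<open>e > 0\<close> by (simp add: field_simps)
    ultimately have "dist (sqrt (of_int d) - of_int a) x < e"
      unfolding dist_real_def by (simp add: algebra_simps)
    moreover have "sqrt (of_int d) - of_int a \<in> ?Q"
      using \<open>d \<ge> 1\<close> \<open>\<forall>k. k^2 \<noteq> d\<close> by fastforce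
    ultimately show "\<exists>y\<in>?Q. dist y x < e"
      by blast
  qed
  then show ?thesis
    by blast
qed

lemma irreducible_monic_quadratic:
  fixes p :: "int poly"
  assumes deg: "degree p = 2" and monic: "lead_coeff p = 1" and no_root: "\<And>r. poly p r \<noteq> 0"
  shows "irreducible p"
proof (rule irreducibleI)
  show "p \<noteq> 0" and "\<not> p dvd 1"
    using deg by (auto simp: is_unit_poly_iff)
  fix A B
  assume p: "p = A * B"
  then have "A \<noteq> 0" "B \<noteq> 0"
    using \<open>p \<noteq> 0\<close> by auto
  then have deg_AB: "degree A + degree B = 2"
    using deg p by (simp add: degree_mult_eq)
  have "is_unit (lead_coeff A * lead_coeff B)"
    using monic p by (simp add: lead_coeff_mult)
  then have unit_A: "is_unit (lead_coeff A)" and unit_B: "is_unit (lead_coeff B)"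
    using is_unit_mult_iff by blast+
  \<comment> \<open>A linear factor with unit leading coefficient would have an integer root.\<close>
  have "degree A \<noteq> 1"
  proof
    assume "degree A = 1"
    then have "\<bar>coeff A 1\<bar> = 1"
      using unit_A by auto
    then have "coeff A 1 * coeff A 1 = 1"
      by (metis abs_mult_self_eq mult_1)
    then have "poly A (- coeff A 0 * coeff A 1) = 0"
      using \<open>degree A = 1\<close> by (simp add: poly_altdef algebra_simps)
    then show False
      using no_root[of "- coeff A 0 * coeff A 1"] p by simp
  qed
  then have "degree A = 0 \<or> degree B = 0"
    using deg_AB by linarith
  moreover have "q dvd 1" if "degree q = 0" "is_unit (lead_coeff q)" for q :: "int poly"
    using that degree_0_id[of q] is_unit_const_poly_iff[of "coeff q 0"] by simp
  ultimately show "A dvd 1 \<or> B dvd 1"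
    using unit_A unit_B by blast
qed

lemma is_minpoly_Z_shifted_sqrt:
  fixes a d :: int
  assumes "0 \<le> d" and nonsquare: "\<forall>k. k^2 \<noteq> d"
  shows "is_minpoly_Z (sqrt (of_int d) - of_int a) [:a^2 - d, 2*a, 1:]"
proof -
  have "poly [:a^2 - d, 2*a, 1:] r = (r + a)^2 - d" for r
    by (simp add: power2_eq_square algebra_simps)
  then have "irreducible [:a^2 - d, 2*a, 1:]"
    using nonsquare by (intro irreducible_monic_quadratic) (auto simp del: poly_pCons)
  then show ?thesis
    unfolding is_minpoly_Z_def using \<open>0 \<le> d\<close>
    by (simp add: map_poly_pCons power2_eq_square algebra_simps)
qed

lemma height_ge_abs_lead_coeff: "\<bar>lead_coeff P\<bar> \<le> height P"
proof (cases "P = 0")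
  case False
  then have "lead_coeff P \<in> set (coeffs P)"
    by (metis coeffs_eq_Nil last_coeffs_eq_coeff_degree last_in_set)
  then show ?thesis
    unfolding height_def by (intro Max_ge) auto
qed (simp add: height_def)

lemma in_closure_open_Diff_finite:
  fixes \<alpha> :: "'a::{perfect_space, t1_space}"
  assumes "open U" and "\<alpha> \<in> U" and "finite R"
  shows "\<alpha> \<in> closure (U - R)"
proof -
  have "\<alpha> islimpt (U \<inter> R) \<union> (U - R)"
    using open_imp_islimpt[OF assms(1,2)] by (simp add: Int_Diff_Un)
  then have "\<alpha> islimpt U - R"
    using islimpt_Un_finite[of "U \<inter> R"] assms(3) by blast
  then show ?thesis
    by (simp add: closure_def)
qed

lemma uncountable_Inter_open_dense:
  fixes \<U> :: "'a::{real_normed_vector, heine_borel, perfect_space} set set"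
  assumes "countable \<U>" and "\<And>U. U \<in> \<U> \<Longrightarrow> open U" and "\<And>U. U \<in> \<U> \<Longrightarrow> closure U = UNIV"
  shows "uncountable (\<Inter>\<U>)"
proof
  \<comment> \<open>Removing the countably many points of \<open>\<Inter>\<U>\<close> keeps a countable family of dense open sets,
    whose intersection is empty, contradicting Baire's theorem.\<close>
  assume "countable (\<Inter>\<U>)"
  define \<G> where "\<G> = \<U> \<union> (\<lambda>s. - {s}) ` \<Inter>\<U>"
  have "countable \<G>"
    unfolding \<G>_def using assms(1) \<open>countable (\<Inter>\<U>)\<close> by (intro countable_Un countable_image)
  moreover have "openin (top_of_set UNIV) T \<and> UNIV \<subseteq> closure T" if "T \<in> \<G>" for T
  proof -
    have "open T \<and> closure T = UNIV"
    proof (cases "T \<in> \<U>")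
      case False
      with that obtain s where "T = - {s}"
        unfolding \<G>_def by blast
      then show ?thesis
        by (simp only: open_Compl closed_singleton closure_complement interior_singleton
            Compl_empty_eq simp_thms)
    qed (use assms(2,3) in blast)
    then show ?thesis
      by (metis open_openin subtopology_UNIV order_refl)
  qed
  ultimately have "UNIV \<subseteq> closure (\<Inter>\<G>)"
    by (rule Baire[OF closed_UNIV])
  then have "\<Inter>\<G> \<noteq> {}"
    by auto
  then obtain \<xi> where \<xi>: "\<xi> \<in> \<Inter>\<G>"
    by blast
  then have "\<xi> \<in> \<Inter>\<U>"
    unfolding \<G>_def by simp
  then have "- {\<xi>} \<in> \<G>"
    unfolding \<G>_def by (intro UnI2 imageI)
  with \<xi> have "\<xi> \<in> - {\<xi>}"
    by (rule InterD)
  then show False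
    by simp
qed

lemma Sup_exponent_eq_infinity:
  assumes "\<And>w H0 :: nat. \<exists>H\<ge>real H0. \<Phi> H (real w)"
  shows "Sup (ereal ` {w. \<forall>H0::real. \<exists>H\<ge>H0. \<Phi> H w}) = \<infinity>"
proof (rule SUP_PInfty)
  fix n :: nat
  have "\<exists>H\<ge>H0. \<Phi> H (real n)" for H0 :: real
  proof -
    obtain H where "H \<ge> real (nat \<lceil>H0\<rceil>)" and "\<Phi> H (real n)"
      using assms by blast
    moreover have "real (nat \<lceil>H0\<rceil>) \<ge> H0"
      by (rule real_nat_ceiling_ge)
    ultimately show ?thesis
      by (intro exI[of _ H]) simp
  qed
  then show "\<exists>w\<in>{w. \<forall>H0::real. \<exists>H\<ge>H0. \<Phi> H w}. ereal (real n) \<le> ereal w"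
    by (intro bexI[of _ "real n"]) simp_all
qed

text \<open>Strict inequalities, so that these sets are open.\<close>

definition w1_set :: "nat \<Rightarrow> nat \<Rightarrow> real set" where
  "w1_set w H0 = {\<xi>. \<exists>H\<ge>real H0. \<exists>P::int poly. degree P \<le> 1 \<and> real_of_int (height P) \<le> H \<and>
     0 < \<bar>poly (map_poly real_of_int P) \<xi>\<bar> \<and> \<bar>poly (map_poly real_of_int P) \<xi>\<bar> < H powr (- real w)}"

definition w_eq2_set :: "nat \<Rightarrow> nat \<Rightarrow> real set" where
  "w_eq2_set w H0 = {\<xi>. \<exists>H\<ge>real H0. \<exists>P::int poly.
     irreducible P \<and> degree P = 2 \<and> real_of_int (height P) \<le> H \<and>
     0 < \<bar>poly (map_poly real_of_int P) \<xi>\<bar> \<and> \<bar>poly (map_poly real_of_int P) \<xi>\<bar> < H powr (- real w)}"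

definition w_eq2_star_set :: "nat \<Rightarrow> nat \<Rightarrow> real set" where
  "w_eq2_star_set w H0 = {\<xi>. \<exists>H\<ge>real H0. \<exists>(\<alpha>::real) (P::int poly).
     is_minpoly_Z \<alpha> P \<and> degree P = 2 \<and> real_of_int (height P) \<le> H \<and>
     0 < \<bar>\<xi> - \<alpha>\<bar> \<and> \<bar>\<xi> - \<alpha>\<bar> < inverse (real_of_int (height P)) * H powr (- real w)}"

lemma open_w1_set: "open (w1_set w H0)"
  unfolding w1_set_def
  by (intro open_Collect_ex open_Collect_conj open_Collect_const open_Collect_less continuous_intros)

lemma open_w_eq2_set: "open (w_eq2_set w H0)"
  unfolding w_eq2_set_def
  by (intro open_Collect_ex open_Collect_conj open_Collect_const open_Collect_less continuous_intros)

lemma open_w_eq2_star_set: "open (w_eq2_star_set w H0)"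
  unfolding w_eq2_star_set_def
  by (intro open_Collect_ex open_Collect_conj open_Collect_const open_Collect_less continuous_intros)

lemma closure_w1_set: "closure (w1_set w H0) = UNIV"
proof -
  have "r \<in> closure (w1_set w H0)" if "r \<in> \<rat>" for r
  proof -
    obtain p q :: int where "q > 0" and r: "r = of_int p / of_int q"
      using \<open>r \<in> \<rat>\<close> by (metis Rats_cases')
    define P where "P = [:-p, q:]"
    let ?f = "poly (map_poly real_of_int P)"
    have f: "?f x = of_int q * x - of_int p" for x
      unfolding P_def by (simp add: map_poly_pCons)
    have "degree P \<le> 1" "height P \<ge> 1"
      using \<open>q > 0\<close> height_ge_abs_lead_coeff[of P] unfolding P_def by auto
    define H where "H = max (real H0) (real_of_int (height P))"
    have "H powr (- real w) > 0"
      using \<open>height P \<ge> 1\<close> unfolding H_def by simp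
    have "r \<in> closure ({x. \<bar>?f x\<bar> < H powr (- real w)} - {x. ?f x = 0})"
    proof (rule in_closure_open_Diff_finite)
      show "open {x. \<bar>?f x\<bar> < H powr (- real w)}"
        by (intro open_Collect_less continuous_intros)
      show "r \<in> {x. \<bar>?f x\<bar> < H powr (- real w)}"
        using \<open>q > 0\<close> \<open>H powr (- real w) > 0\<close> unfolding f r by simp
      show "finite {x. ?f x = 0}"
        using \<open>q > 0\<close> unfolding P_def by (intro poly_roots_finite) (simp add: map_poly_eq_0_iff)
    qed
    moreover have "{x. \<bar>?f x\<bar> < H powr (- real w)} - {x. ?f x = 0} \<subseteq> w1_set w H0"
      unfolding w1_set_def using \<open>degree P \<le> 1\<close>
      by (intro subsetI CollectI exI[of _ H] conjI exI[of _ P]) (auto simp: H_def)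
    ultimately show ?thesis
      using closure_mono by blast
  qed
  then have "\<rat> \<subseteq> closure (w1_set w H0)"
    by (rule subsetI)
  then have "closure \<rat> \<subseteq> closure (w1_set w H0)"
    by (rule closure_minimal[OF _ closed_closure])
  then show ?thesis
    by (simp add: Rats_closure_real top.extremum_unique)
qed

lemma closure_w_eq2_set_Int_w_eq2_star_set:
  "closure (w_eq2_set w H0 \<inter> w_eq2_star_set w H0) = UNIV"
proof -
  let ?Q = "{sqrt (of_int d) - of_int a | a d :: int. 0 \<le> d \<and> (\<forall>k. k^2 \<noteq> d)}"
  have "\<alpha> \<in> closure (w_eq2_set w H0 \<inter> w_eq2_star_set w H0)" if "\<alpha> \<in> ?Q" for \<alpha>
  proof -
    obtain a d :: int where \<alpha>: "\<alpha> = sqrt (of_int d) - of_int a"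
      and "0 \<le> d" "\<forall>k. k^2 \<noteq> d"
      using \<open>\<alpha> \<in> ?Q\<close> by blast
    define P where "P = [:a^2 - d, 2*a, 1:]"
    let ?f = "poly (map_poly real_of_int P)"
    have "is_minpoly_Z \<alpha> P"
      unfolding \<alpha> P_def using \<open>0 \<le> d\<close> \<open>\<forall>k. k^2 \<noteq> d\<close> by (rule is_minpoly_Z_shifted_sqrt)
    then have "irreducible P" "?f \<alpha> = 0"
      unfolding is_minpoly_Z_def by simp_all
    have "degree P = 2" "height P \<ge> 1"
      using height_ge_abs_lead_coeff[of P] unfolding P_def by simp_all
    define H where "H = max (real H0) (real_of_int (height P))"
    define c where "c = H powr (- real w)"
    have "c > 0"
      using \<open>height P \<ge> 1\<close> unfolding c_def H_def by simp
    define U where "U = {x. \<bar>?f x\<bar> < c \<and> \<bar>x - \<alpha>\<bar> < inverse (real_of_int (height P)) * c}"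
    have "\<alpha> \<in> closure (U - {x. ?f x = 0})"
    proof (rule in_closure_open_Diff_finite)
      show "open U"
        unfolding U_def by (intro open_Collect_conj open_Collect_less continuous_intros)
      show "\<alpha> \<in> U"
        unfolding U_def using \<open>?f \<alpha> = 0\<close> \<open>c > 0\<close> \<open>height P \<ge> 1\<close> by simp
      show "finite {x. ?f x = 0}"
        using \<open>degree P = 2\<close> by (intro poly_roots_finite) (auto simp: map_poly_eq_0_iff)
    qed
    moreover have "U - {x. ?f x = 0} \<subseteq> w_eq2_set w H0 \<inter> w_eq2_star_set w H0"
    proof
      fix x
      assume x: "x \<in> U - {x. ?f x = 0}"
      then have "x \<noteq> \<alpha>"
        using \<open>?f \<alpha> = 0\<close> by auto
      have H: "H \<ge> real H0" "real_of_int (height P) \<le> H"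
        unfolding H_def by simp_all
      have "0 < \<bar>?f x\<bar>" "\<bar>?f x\<bar> < H powr (- real w)"
           "0 < \<bar>x - \<alpha>\<bar>" "\<bar>x - \<alpha>\<bar> < inverse (real_of_int (height P)) * H powr (- real w)"
        using x \<open>x \<noteq> \<alpha>\<close> unfolding U_def c_def by auto
      with H \<open>irreducible P\<close> \<open>is_minpoly_Z \<alpha> P\<close> \<open>degree P = 2\<close>
      show "x \<in> w_eq2_set w H0 \<inter> w_eq2_star_set w H0"
        unfolding w_eq2_set_def w_eq2_star_set_def by blast
    qed
    ultimately show ?thesis
      using closure_mono by blast
  qed
  then have "?Q \<subseteq> closure (w_eq2_set w H0 \<inter> w_eq2_star_set w H0)"
    by (rule subsetI)
  then have "closure ?Q \<subseteq> closure (w_eq2_set w H0 \<inter> w_eq2_star_set w H0)"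
    by (rule closure_minimal[OF _ closed_closure])
  then show ?thesis
    by (simp add: closure_shifted_sqrt_nonsquares top.extremum_unique)
qed

lemma liouville_if_in_w1_sets:
  assumes "\<And>w H0. \<xi> \<in> w1_set w H0"
  shows "liouville \<xi>"
  unfolding liouville_def w1_def
  by (rule Sup_exponent_eq_infinity)
    (use assms in \<open>unfold w1_set_def mem_Collect_eq, blast intro: less_imp_le\<close>)

lemma w_eq2_eq_infinity_if_in_w_eq2_sets:
  assumes "\<And>w H0. \<xi> \<in> w_eq2_set w H0"
  shows "w_eq2 \<xi> = \<infinity>"
  unfolding w_eq2_def
  by (rule Sup_exponent_eq_infinity)
    (use assms in \<open>unfold w_eq2_set_def mem_Collect_eq, blast intro: less_imp_le\<close>)

lemma w_eq2_star_eq_infinity_if_in_w_eq2_star_sets: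
  assumes "\<And>w H0. \<xi> \<in> w_eq2_star_set w H0"
  shows "w_eq2_star \<xi> = \<infinity>"
  unfolding w_eq2_star_def
  by (rule Sup_exponent_eq_infinity)
    (use assms in \<open>unfold w_eq2_star_set_def mem_Collect_eq, blast intro: less_imp_le\<close>)

theorem corollary1p4:
  shows "uncountable {\<xi>::real. liouville \<xi> \<and> w_eq2 \<xi> = \<infinity> \<and> w_eq2_star \<xi> = \<infinity>}"
proof -
  define \<U> where "\<U> = range (case_prod w1_set) \<union>
    range (\<lambda>(w, H0). w_eq2_set w H0 \<inter> w_eq2_star_set w H0)"
  have "uncountable (\<Inter>\<U>)"
  proof (rule uncountable_Inter_open_dense)
    show "countable \<U>"
      unfolding \<U>_def by simp
    show "open U" and "closure U = UNIV" if "U \<in> \<U>" for U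
      using that unfolding \<U>_def
      by (auto simp: open_w1_set open_w_eq2_set open_w_eq2_star_set closure_w1_set
          closure_w_eq2_set_Int_w_eq2_star_set)
  qed
  moreover have "\<Inter>\<U> \<subseteq> {\<xi>. liouville \<xi> \<and> w_eq2 \<xi> = \<infinity> \<and> w_eq2_star \<xi> = \<infinity>}"
    unfolding \<U>_def
    by (auto intro!: liouville_if_in_w1_sets w_eq2_eq_infinity_if_in_w_eq2_sets
        w_eq2_star_eq_infinity_if_in_w_eq2_star_sets)
  ultimately show ?thesis
    using countable_subset by blast
qed

end
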